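(* Let $k\ge n\ge1$ and let $\bar K$ be the transition matrix of the Burnside process on $\Pi_n$ (defined in the context). Let $x,y\in\Pi_n$ have $j_x$ and $j_y$ blocks respectively, and suppose $j_x\le j_y$. Then $$\bar K(x,y)=\sum_{j=j_y}^{\min(j_x+j_y,\,k)}\frac{j_x!\,j_y!}{(j-j_x)!\,(j-j_y)!\,(j_x+j_y-j)!}\,E\left[\frac{1}{(Y_j+j)^n}\right],$$ where $Y_j$ denotes the number of fixed points of a uniformly random permutation in $S_{k-j}$ (with $Y_k=0$). If $j_x>j_y$, then $\bar K(x,y)=\bar K(y,x)$.
   Context: $S_k$ acts on $[k]^n$ by $\sigma(u_1,\dots,u_n)=(\sigma(u_1),\dots,\sigma(u_n))$. The Burnside process on $[k]^n$ is the Markov chain which, from $u$, chooses $\sigma$ uniformly among permutations of $[k]$ fixing every value appearing in $u$, then produces $v\in[k]^n$ by choosing each coordinate independently and uniformly among the fixed points of $\sigma$; its transition matrix is $K(u,v)=\sum_{\sigma\in G_u\cap G_v}\frac{1}{|G_u|\,\mathrm{fp}(\sigma)^n}$ with $G_u$ the stabilizer of $u$ and $\mathrm{fp}(\sigma)$ the number of fixed points. $\Pi_n$ is the set of set partitions of $[n]$; to $u\in[k]^n$ corresponds the set partition in which $i,j$ lie in the same block iff $u_i=u_j$, and the orbits of the action are exactly the classes of vectors with the same set partition. The Burnside process on $\Pi_n$ is the lumped chain: $\bar K(x,y)=\sum_{v\text{ with partition }y}K(u,v)$ for any $u$ with partition $x$. *)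

theory Defs
  imports Complex_Main "HOL-Library.FuncSet" "HOL-Library.Disjoint_Sets" "HOL-Combinatorics.Permutations"
begin

text \<open>[k] is modelled as {0..<k}, coordinates [n] as {0..<n}.
  Vectors in [k]^n are extensional functions {0..<n} -> {0..<k}.\<close>

definition words :: "nat \<Rightarrow> nat \<Rightarrow> (nat \<Rightarrow> nat) set" where
  "words k n = {0..<n} \<rightarrow>\<^sub>E {0..<k}"

definition fp :: "nat \<Rightarrow> (nat \<Rightarrow> nat) \<Rightarrow> nat" where
  "fp k \<sigma> = card {a \<in> {0..<k}. \<sigma> a = a}"

definition stab :: "nat \<Rightarrow> nat \<Rightarrow> (nat \<Rightarrow> nat) \<Rightarrow> (nat \<Rightarrow> nat) set" where
  "stab k n u = {\<sigma>. \<sigma> permutes {0..<k} \<and> (\<forall>i\<in>{0..<n}. \<sigma> (u i) = u i)}"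

definition Kb :: "nat \<Rightarrow> nat \<Rightarrow> (nat \<Rightarrow> nat) \<Rightarrow> (nat \<Rightarrow> nat) \<Rightarrow> real" where
  "Kb k n u v = (\<Sum>\<sigma>\<in>stab k n u \<inter> stab k n v.
      1 / (real (card (stab k n u)) * real (fp k \<sigma>) ^ n))"

definition setpart :: "nat \<Rightarrow> (nat \<Rightarrow> nat) \<Rightarrow> nat set set" where
  "setpart n u = {{i \<in> {0..<n}. u i = u j} | j. j \<in> {0..<n}}"

definition setparts :: "nat \<Rightarrow> nat set set set" where
  "setparts n = {P. partition_on {0..<n} P}"

definition Kbar :: "nat \<Rightarrow> nat \<Rightarrow> nat set set \<Rightarrow> nat set set \<Rightarrow> real" where
  "Kbar k n x y = (let u = (SOME u. u \<in> words k n \<and> setpart n u = x) in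
      \<Sum>v\<in>{v \<in> words k n. setpart n v = y}. Kb k n u v)"

text \<open>E[1/(Y_j + j)^n], Y_j the number of fixed points of a uniform random
  permutation of S_(k-j).\<close>
definition EY :: "nat \<Rightarrow> nat \<Rightarrow> nat \<Rightarrow> real" where
  "EY k n j = (\<Sum>\<tau>\<in>{\<tau>. \<tau> permutes {0..<k-j}}. 1 / (real (fp (k-j) \<tau>) + real j) ^ n)
      / real (card {\<tau>. \<tau> permutes {0..<k-j}})"

end

theory Submission
  imports Defs "HOL-Combinatorics.Multiset_Permutations"
begin

text \<open>
  Write U and V for the sets of values of u and v, a = |U| and b = |V|. The stabiliser of u
  consists of the permutations fixing U pointwise, so it has (k - a)! elements, and
  the permutations fixing U \<union> V pointwise are those of the remaining k - j points,
  j = |U \<union> V|, each with j more fixed points. Hence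
  K(u, v) = (k - j)! E[1/(Y_j + j)^n] / (k - a)! depends only on j.
  The vectors v with a given partition y correspond to the b-sets V together with
  a bijection from the blocks of y onto V, so summing over them gives b! times a sum
  over b-subsets V of [k]. Grouping these by the overlap i = |U \<inter> V|, of which there
  are (a choose i) ((k - a) choose (b - i)), and cancelling factorials leaves a sum that
  is symmetric in a and b; the substitution j = a + b - i gives the stated formula.
\<close>

section \<open>Permutations fixing a set pointwise\<close>

lemma card_fixpoints_conj:
  assumes f: "bij_betw f A B" and \<pi>: "\<pi> permutes A"
  shows "card {z \<in> B. f (\<pi> (inv_into A f z)) = z} = card {z \<in> A. \<pi> z = z}"
proof -
  have "{z \<in> B. f (\<pi> (inv_into A f z)) = z} = f ` {z \<in> A. \<pi> z = z}"
  proof safe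
    fix z assume z: "z \<in> B" "f (\<pi> (inv_into A f z)) = z"
    have "inv_into A f z \<in> A" "f (inv_into A f z) = z"
      using f z(1) by (auto simp: bij_betw_def inv_into_into f_inv_into_f)
    moreover have "\<pi> (inv_into A f z) \<in> A"
      using \<pi> \<open>inv_into A f z \<in> A\<close> by (simp add: permutes_in_image)
    ultimately show "z \<in> f ` {z \<in> A. \<pi> z = z}"
      using z(2) f by (force simp: bij_betw_def dest: inj_onD)
  next
    fix z assume "z \<in> A" "\<pi> z = z"
    then show "f z \<in> B" "f (\<pi> (inv_into A f (f z))) = f z"
      using f by (auto simp: bij_betw_def)
  qed
  moreover have "inj_on f {z \<in> A. \<pi> z = z}"
    using f by (auto simp: bij_betw_def intro: inj_on_subset)
  ultimately show ?thesis by (simp add: card_image)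
qed

lemma sum_fixpoints_bij_betw:
  assumes f: "bij_betw f A B"
  shows "(\<Sum>\<pi> | \<pi> permutes A. g (card {z \<in> A. \<pi> z = z}))
       = (\<Sum>\<pi> | \<pi> permutes B. g (card {z \<in> B. \<pi> z = z}))"
proof -
  have "(\<Sum>\<pi> | \<pi> permutes B. g (card {z \<in> B. \<pi> z = z}))
      = (\<Sum>\<pi> | \<pi> permutes A. g (card {z \<in> B. f (\<pi> (inv_into A f z)) = z}))"
    by (subst sum.reindex_bij_betw[OF bij_betw_permutations[OF f], symmetric])
      (auto intro!: sum.cong arg_cong[of _ _ g] arg_cong[of _ _ card])
  also have "\<dots> = (\<Sum>\<pi> | \<pi> permutes A. g (card {z \<in> A. \<pi> z = z}))"
    by (rule sum.cong) (simp_all add: card_fixpoints_conj[OF f])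
  finally show ?thesis ..
qed

definition perms_fixing :: "nat \<Rightarrow> nat set \<Rightarrow> (nat \<Rightarrow> nat) set" where
  "perms_fixing k S = {\<sigma>. \<sigma> permutes {0..<k} \<and> (\<forall>s\<in>S. \<sigma> s = s)}"

lemma perms_fixing_eq_permutes:
  assumes "S \<subseteq> {0..<k}"
  shows "perms_fixing k S = {\<sigma>. \<sigma> permutes {0..<k} - S}"
proof -
  have "\<sigma> permutes {0..<k} \<and> (\<forall>s\<in>S. \<sigma> s = s) \<longleftrightarrow> \<sigma> permutes {0..<k} - S" for \<sigma>
  proof
    assume "\<sigma> permutes {0..<k} \<and> (\<forall>s\<in>S. \<sigma> s = s)"
    then show "\<sigma> permutes {0..<k} - S" by (auto elim: permutes_superset)
  next
    assume \<sigma>: "\<sigma> permutes {0..<k} - S"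
    then show "\<sigma> permutes {0..<k} \<and> (\<forall>s\<in>S. \<sigma> s = s)"
      using permutes_not_in[OF \<sigma>] by (auto intro: permutes_subset)
  qed
  then show ?thesis unfolding perms_fixing_def by simp
qed

lemma sum_perms_fixing:
  assumes S: "S \<subseteq> {0..<k}"
  shows "(\<Sum>\<sigma>\<in>perms_fixing k S. g (fp k \<sigma>))
       = (\<Sum>\<tau> | \<tau> permutes {0..<k - card S}. g (card S + fp (k - card S) \<tau>))"
proof -
  define D where "D = {0..<k} - S"
  have fp_eq: "fp k \<sigma> = card S + card {z \<in> D. \<sigma> z = z}" if \<sigma>: "\<sigma> permutes D" for \<sigma>
  proof -
    have "{a \<in> {0..<k}. \<sigma> a = a} = S \<union> {z \<in> D. \<sigma> z = z}"
      using S permutes_not_in[OF \<sigma>] by (auto simp: D_def)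
    moreover have "finite S" using S finite_subset by blast
    then have "card (S \<union> {z \<in> D. \<sigma> z = z}) = card S + card {z \<in> D. \<sigma> z = z}"
      by (intro card_Un_disjoint) (auto simp: D_def)
    ultimately show ?thesis unfolding fp_def by simp
  qed
  have "card D = k - card S"
    using S by (simp add: D_def card_Diff_subset finite_subset)
  then obtain f where f: "bij_betw f D {0..<k - card S}"
    using ex_bij_betw_finite_nat[of D] by (auto simp: D_def)
  have "(\<Sum>\<sigma>\<in>perms_fixing k S. g (fp k \<sigma>))
      = (\<Sum>\<sigma> | \<sigma> permutes D. (\<lambda>m. g (card S + m)) (card {z \<in> D. \<sigma> z = z}))"
    unfolding perms_fixing_eq_permutes[OF S] D_def[symmetric] by (rule sum.cong) (simp_all add: fp_eq)
  also have "\<dots> = (\<Sum>\<tau> | \<tau> permutes {0..<k - card S}. g (card S + fp (k - card S) \<tau>))"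
    unfolding fp_def by (rule sum_fixpoints_bij_betw[OF f])
  finally show ?thesis .
qed

lemma card_perms_fixing:
  assumes "S \<subseteq> {0..<k}"
  shows "card (perms_fixing k S) = fact (k - card S)"
  using sum_perms_fixing[OF assms, of "\<lambda>_. 1::nat"] by (simp add: card_permutations)

lemma sum_perms_fixing_EY:
  assumes "S \<subseteq> {0..<k}"
  shows "(\<Sum>\<sigma>\<in>perms_fixing k S. 1 / real (fp k \<sigma>) ^ n) = fact (k - card S) * EY k n (card S)"
  using sum_perms_fixing[OF assms, of "\<lambda>m. 1 / real m ^ n"]
  by (simp add: EY_def card_permutations add.commute)

section \<open>Counting subsets and distinct lists\<close>

definition distinct_lists :: "'a set \<Rightarrow> nat \<Rightarrow> 'a list set" where
  "distinct_lists A b = {xs. set xs \<subseteq> A \<and> length xs = b \<and> distinct xs}"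

lemma finite_distinct_lists: "finite A \<Longrightarrow> finite (distinct_lists A b)"
  unfolding distinct_lists_def
  by (rule finite_subset[OF _ finite_lists_length_eq[of A b]]) auto

lemma sum_distinct_lists:
  assumes A: "finite A"
  shows "(\<Sum>xs\<in>distinct_lists A b. F (set xs)) = fact b * (\<Sum>V | V \<subseteq> A \<and> card V = b. F V)"
proof -
  define T where "T = {V. V \<subseteq> A \<and> card V = b}"
  have "finite T" using A unfolding T_def by simp
  moreover have "set ` distinct_lists A b \<subseteq> T"
    unfolding T_def distinct_lists_def by (auto simp: distinct_card)
  ultimately have "(\<Sum>xs\<in>distinct_lists A b. F (set xs))
      = (\<Sum>V\<in>T. \<Sum>xs | xs \<in> distinct_lists A b \<and> set xs = V. F (set xs))"
    by (rule sum.group[OF finite_distinct_lists[OF A], symmetric])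
  also have "\<dots> = (\<Sum>V\<in>T. fact b * F V)"
  proof (rule sum.cong[OF refl])
    fix V assume V: "V \<in> T"
    then have "{xs. xs \<in> distinct_lists A b \<and> set xs = V} = permutations_of_set V"
      unfolding T_def distinct_lists_def permutations_of_set_def by (auto simp: distinct_card)
    moreover have "F (set xs) = F V" if "xs \<in> permutations_of_set V" for xs
      using that by (simp add: permutations_of_setD)
    moreover have "finite V" using V A unfolding T_def by (auto intro: finite_subset)
    ultimately show "(\<Sum>xs | xs \<in> distinct_lists A b \<and> set xs = V. F (set xs)) = fact b * F V"
      using V unfolding T_def by simp
  qed
  finally show ?thesis unfolding T_def by (simp add: sum_distrib_left)
qed

lemma card_subsets_overlap:
  assumes A: "finite A" and U: "U \<subseteq> A" and i: "i \<le> b"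
  shows "card {V. V \<subseteq> A \<and> card V = b \<and> card (V \<inter> U) = i}
       = (card U choose i) * ((card A - card U) choose (b - i))"
proof -
  have fU: "finite U" using A U finite_subset by blast
  have "bij_betw (\<lambda>V. (V \<inter> U, V - U)) {V. V \<subseteq> A \<and> card V = b \<and> card (V \<inter> U) = i}
          ({X. X \<subseteq> U \<and> card X = i} \<times> {Y. Y \<subseteq> A - U \<and> card Y = b - i})"
  proof (rule bij_betw_byWitness[where f' = "\<lambda>(X, Y). X \<union> Y"])
    show "(\<lambda>V. (V \<inter> U, V - U)) ` {V. V \<subseteq> A \<and> card V = b \<and> card (V \<inter> U) = i}
            \<subseteq> {X. X \<subseteq> U \<and> card X = i} \<times> {Y. Y \<subseteq> A - U \<and> card Y = b - i}"
    proof (rule image_subsetI)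
      fix V assume "V \<in> {V. V \<subseteq> A \<and> card V = b \<and> card (V \<inter> U) = i}"
      then have V: "V \<subseteq> A" "card V = b" "card (V \<inter> U) = i" by auto
      have "finite V" using A V(1) by (rule rev_finite_subset)
      then have "card V = card (V \<inter> U) + card (V - U)" by (rule card_Int_Diff)
      then show "(V \<inter> U, V - U) \<in> {X. X \<subseteq> U \<and> card X = i} \<times> {Y. Y \<subseteq> A - U \<and> card Y = b - i}"
        using V by auto
    qed
    show "(\<lambda>(X, Y). X \<union> Y) ` ({X. X \<subseteq> U \<and> card X = i} \<times> {Y. Y \<subseteq> A - U \<and> card Y = b - i})
            \<subseteq> {V. V \<subseteq> A \<and> card V = b \<and> card (V \<inter> U) = i}"
    proof (rule image_subsetI)
      fix p assume "p \<in> {X. X \<subseteq> U \<and> card X = i} \<times> {Y. Y \<subseteq> A - U \<and> card Y = b - i}"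
      then obtain X Y where XY: "p = (X, Y)" "X \<subseteq> U" "Y \<subseteq> A - U" "card X = i" "card Y = b - i"
        by auto
      have "finite X" "finite Y" using XY fU A by (auto intro: finite_subset)
      then have "card (X \<union> Y) = b" using XY i by (subst card_Un_disjoint) auto
      moreover have "(X \<union> Y) \<inter> U = X" using XY by auto
      ultimately show "(\<lambda>(X, Y). X \<union> Y) p \<in> {V. V \<subseteq> A \<and> card V = b \<and> card (V \<inter> U) = i}"
        using XY U by auto
    qed
  qed auto
  then have "card {V. V \<subseteq> A \<and> card V = b \<and> card (V \<inter> U) = i}
      = card {X. X \<subseteq> U \<and> card X = i} * card {Y. Y \<subseteq> A - U \<and> card Y = b - i}"
    by (simp add: bij_betw_same_card card_cartesian_product)
  also have "\<dots> = (card U choose i) * ((card A - card U) choose (b - i))"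
    using A U fU by (simp add: n_subsets card_Diff_subset)
  finally show ?thesis .
qed

lemma sum_subsets_overlap:
  fixes H :: "nat \<Rightarrow> 'a::semiring_1"
  assumes A: "finite A" and U: "U \<subseteq> A"
  shows "(\<Sum>V | V \<subseteq> A \<and> card V = b. H (card (V \<inter> U)))
       = (\<Sum>i = 0..b. of_nat ((card U choose i) * ((card A - card U) choose (b - i))) * H i)"
proof -
  define T where "T = {V. V \<subseteq> A \<and> card V = b}"
  have T: "finite T" using A unfolding T_def by simp
  have overlap: "(\<lambda>V. card (V \<inter> U)) ` T \<subseteq> {0..b}"
    unfolding T_def by (auto intro!: card_mono intro: rev_finite_subset[OF A])
  have "(\<Sum>V\<in>T. H (card (V \<inter> U)))
      = (\<Sum>i = 0..b. \<Sum>V | V \<in> T \<and> card (V \<inter> U) = i. H (card (V \<inter> U)))"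
    by (rule sum.group[OF T finite_atLeastAtMost overlap, symmetric])
  also have "\<dots> = (\<Sum>i = 0..b. of_nat ((card U choose i) * ((card A - card U) choose (b - i))) * H i)"
  proof (rule sum.cong[OF refl])
    fix i assume "i \<in> {0..b}"
    then have "card {V. V \<in> T \<and> card (V \<inter> U) = i} = (card U choose i) * ((card A - card U) choose (b - i))"
      using card_subsets_overlap[OF A U] unfolding T_def by simp
    then show "(\<Sum>V | V \<in> T \<and> card (V \<inter> U) = i. H (card (V \<inter> U)))
        = of_nat ((card U choose i) * ((card A - card U) choose (b - i))) * H i"
      by simp
  qed
  finally show ?thesis unfolding T_def .
qed

section \<open>Words with a prescribed set partition\<close>

lemma setpart_eq_image: "setpart n v = (\<lambda>j. {i \<in> {0..<n}. v i = v j}) ` {0..<n}"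
  unfolding setpart_def by auto

lemma setpart_eq_iff:
  "setpart n v = setpart n w \<longleftrightarrow> (\<forall>i<n. \<forall>j<n. v i = v j \<longleftrightarrow> w i = w j)"
proof
  have same_block: "w i = w j"
    if "setpart n v = setpart n w" "i < n" "j < n" "v i = v j" for v w :: "nat \<Rightarrow> nat" and i j
  proof -
    have "{l \<in> {0..<n}. v l = v i} \<in> setpart n w" using that unfolding setpart_def by auto
    then obtain m where m: "{l \<in> {0..<n}. v l = v i} = {l \<in> {0..<n}. w l = w m}"
      unfolding setpart_def by auto
    have "i \<in> {l \<in> {0..<n}. v l = v i}" "j \<in> {l \<in> {0..<n}. v l = v i}"
      using that by auto
    then have "w i = w m" "w j = w m" unfolding m by auto
    then show ?thesis by simp
  qed
  assume "setpart n v = setpart n w"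
  then show "\<forall>i<n. \<forall>j<n. v i = v j \<longleftrightarrow> w i = w j"
    using same_block same_block[OF sym] by blast
next
  assume "\<forall>i<n. \<forall>j<n. v i = v j \<longleftrightarrow> w i = w j"
  then show "setpart n v = setpart n w"
    unfolding setpart_eq_image by (intro image_cong) auto
qed

lemma card_setpart: "card (setpart n u) = card (u ` {0..<n})"
proof -
  have "bij_betw (\<lambda>c. {i \<in> {0..<n}. u i = c}) (u ` {0..<n}) (setpart n u)"
  proof (rule bij_betw_imageI)
    show "inj_on (\<lambda>c. {i \<in> {0..<n}. u i = c}) (u ` {0..<n})"
      by (rule inj_onI) blast
  qed (auto simp: setpart_eq_image)
  then show ?thesis by (simp add: bij_betw_same_card)
qed

lemma partition_on_labelling:
  assumes P: "partition_on {0..<n} P"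
  obtains c where "c ` {0..<n} = {0..<card P}" "setpart n c = P"
proof -
  define r where "r = {(i, j). \<exists>p\<in>P. i \<in> p \<and> j \<in> p}"
  have r: "equiv {0..<n} r" unfolding r_def by (rule equiv_partition_on[OF P])
  have quot: "{0..<n} // r = P" unfolding r_def by (rule partition_on_eq_quotient[OF P])
  then obtain e where e: "bij_betw e ({0..<n} // r) {0..<card P}"
    using ex_bij_betw_finite_nat finite_elements[OF _ P] by blast
  define c where "c i = e (r `` {i})" for i
  have block: "{j \<in> {0..<n}. c j = c i} = r `` {i}" if "i < n" for i
  proof -
    have "c j = c i \<longleftrightarrow> (j, i) \<in> r" if "j < n" for j
    proof -
      have "r `` {j} \<in> {0..<n} // r" "r `` {i} \<in> {0..<n} // r"
        using that \<open>i < n\<close> by (auto intro: quotientI)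
      then have "c j = c i \<longleftrightarrow> r `` {j} = r `` {i}"
        by (simp add: c_def inj_on_eq_iff[OF bij_betw_imp_inj_on[OF e]])
      then show ?thesis using r \<open>i < n\<close> that by (simp add: eq_equiv_class_iff)
    qed
    then show ?thesis
      using r unfolding equiv_def sym_def refl_on_def by auto
  qed
  have "setpart n c = (\<lambda>i. r `` {i}) ` {0..<n}"
    unfolding setpart_eq_image by (rule image_cong[OF refl], rule block) simp
  also have "\<dots> = P" using quot by (auto simp: quotient_def)
  moreover have "c ` {0..<n} = {0..<card P}"
    using e quot by (auto simp: c_def bij_betw_def quotient_def image_image)
  ultimately show ?thesis using that by blast
qed

lemma ex_word_setpart:
  assumes "x \<in> setparts n" "n \<le> k"
  shows "\<exists>u. u \<in> words k n \<and> setpart n u = x"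
proof -
  obtain c where c: "c ` {0..<n} = {0..<card x}" "setpart n c = x"
    using partition_on_labelling assms(1) unfolding setparts_def by blast
  have "card x \<le> n" using card_image_le[of "{0..<n}" c] c(1) by simp
  moreover have "c i < card x" if "i < n" for i using c(1) that by auto
  ultimately have "c i < k" if "i < n" for i using that assms(2) by fastforce
  then have "restrict c {0..<n} \<in> words k n" by (auto simp: words_def)
  moreover have "setpart n (restrict c {0..<n}) = x"
    unfolding c(2)[symmetric] setpart_eq_iff by simp
  ultimately show ?thesis by blast
qed

text \<open>A word with the same partition as the labelling c is c followed by an injective
  relabelling of {0..<b}, recorded as the list of its values.\<close>

lemma bij_betw_distinct_lists_words:
  assumes c: "c ` {0..<n} = {0..<b}"
  shows "bij_betw (\<lambda>xs. \<lambda>i\<in>{0..<n}. xs ! c i)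
           (distinct_lists {0..<k} b) {v \<in> words k n. setpart n v = setpart n c}"
proof -
  define r where "r = inv_into {0..<n} c"
  have r: "r p < n" "c (r p) = p" if "p < b" for p
  proof -
    have "p \<in> c ` {0..<n}" using c that by simp
    then show "r p < n" "c (r p) = p" unfolding r_def
      using inv_into_into[of p c "{0..<n}"] f_inv_into_f[of p c "{0..<n}"] by auto
  qed
  have c_less: "c i < b" if "i < n" for i using c that by auto
  show ?thesis
  proof (rule bij_betw_byWitness[where f' = "\<lambda>v. map (\<lambda>p. v (r p)) [0..<b]"])
    show "\<forall>xs\<in>distinct_lists {0..<k} b. map (\<lambda>p. (\<lambda>i\<in>{0..<n}. xs ! c i) (r p)) [0..<b] = xs"
      by (auto simp: distinct_lists_def r intro: nth_equalityI)
    show "\<forall>v\<in>{v \<in> words k n. setpart n v = setpart n c}.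
            (\<lambda>i\<in>{0..<n}. map (\<lambda>p. v (r p)) [0..<b] ! c i) = v"
    proof safe
      fix v assume v: "v \<in> words k n" "setpart n v = setpart n c"
      have "v (r (c i)) = v i" if "i < n" for i
        using v(2) r[OF c_less[OF that]] that unfolding setpart_eq_iff by blast
      then show "(\<lambda>i\<in>{0..<n}. map (\<lambda>p. v (r p)) [0..<b] ! c i) = v"
        using v(1) by (auto simp: words_def c_less PiE_def extensional_def)
    qed
    show "(\<lambda>xs. \<lambda>i\<in>{0..<n}. xs ! c i) ` distinct_lists {0..<k} b
            \<subseteq> {v \<in> words k n. setpart n v = setpart n c}"
    proof (rule image_subsetI, intro CollectI conjI)
      fix xs assume "xs \<in> distinct_lists {0..<k} b"
      then have xs: "set xs \<subseteq> {0..<k}" "length xs = b" "distinct xs"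
        unfolding distinct_lists_def by auto
      then have "xs ! c i < k" if "i < n" for i
        using nth_mem[of "c i" xs] c_less[OF that] by fastforce
      then show "(\<lambda>i\<in>{0..<n}. xs ! c i) \<in> words k n" by (auto simp: words_def)
      show "setpart n (\<lambda>i\<in>{0..<n}. xs ! c i) = setpart n c"
        unfolding setpart_eq_iff using xs c_less by (simp add: nth_eq_iff_index_eq)
    qed
    show "(\<lambda>v. map (\<lambda>p. v (r p)) [0..<b]) ` {v \<in> words k n. setpart n v = setpart n c}
            \<subseteq> distinct_lists {0..<k} b"
    proof (rule image_subsetI, clarify)
      fix v assume v: "v \<in> words k n" "setpart n v = setpart n c"
      have "inj_on (\<lambda>p. v (r p)) {0..<b}"
        using v(2) r unfolding setpart_eq_iff by (intro inj_onI) (metis atLeastLessThan_iff)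
      moreover have "v (r p) < k" if "p < b" for p using v(1) r[OF that] by (auto simp: words_def)
      ultimately show "map (\<lambda>p. v (r p)) [0..<b] \<in> distinct_lists {0..<k} b"
        by (auto simp: distinct_lists_def distinct_map)
    qed
  qed
qed

lemma image_word_of_list:
  assumes "c ` {0..<n} = {0..<length xs}"
  shows "(\<lambda>i. xs ! c i) ` {0..<n} = set xs"
proof -
  have "(\<lambda>i. xs ! c i) ` {0..<n} = (\<lambda>p. xs ! p) ` {0..<length xs}"
    unfolding assms[symmetric] by (simp add: image_image)
  then show ?thesis by (auto simp: set_conv_nth)
qed

lemma sum_words_setpart:
  assumes "y \<in> setparts n"
  shows "(\<Sum>v | v \<in> words k n \<and> setpart n v = y. F (v ` {0..<n}))
       = fact (card y) * (\<Sum>V | V \<subseteq> {0..<k} \<and> card V = card y. F V)"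
proof -
  obtain c where c: "c ` {0..<n} = {0..<card y}" "setpart n c = y"
    using partition_on_labelling assms unfolding setparts_def by blast
  have "(\<Sum>v | v \<in> words k n \<and> setpart n v = y. F (v ` {0..<n}))
      = (\<Sum>xs\<in>distinct_lists {0..<k} (card y). F ((\<lambda>i\<in>{0..<n}. xs ! c i) ` {0..<n}))"
    using sum.reindex_bij_betw[OF bij_betw_distinct_lists_words[OF c(1)], of "\<lambda>v. F (v ` {0..<n})"]
    by (simp add: c(2))
  also have "\<dots> = (\<Sum>xs\<in>distinct_lists {0..<k} (card y). F (set xs))"
    using c(1) by (intro sum.cong refl) (simp add: image_word_of_list distinct_lists_def)
  also have "\<dots> = fact (card y) * (\<Sum>V | V \<subseteq> {0..<k} \<and> card V = card y. F V)"
    by (simp add: sum_distinct_lists)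
  finally show ?thesis .
qed

section \<open>The lumped kernel\<close>

lemma stab_eq_perms_fixing: "stab k n u = perms_fixing k (u ` {0..<n})"
  unfolding stab_def perms_fixing_def by auto

lemma Kb_eq_EY:
  assumes "u \<in> words k n" "v \<in> words k n"
  defines "U \<equiv> u ` {0..<n}" and "W \<equiv> u ` {0..<n} \<union> v ` {0..<n}"
  shows "Kb k n u v = fact (k - card W) * EY k n (card W) / fact (k - card U)"
proof -
  have "U \<subseteq> {0..<k}" "W \<subseteq> {0..<k}"
    using assms(1,2) by (auto simp: U_def W_def words_def)
  moreover have "stab k n u \<inter> stab k n v = perms_fixing k W"
    unfolding stab_eq_perms_fixing W_def perms_fixing_def by auto
  then have "Kb k n u v = (\<Sum>\<sigma>\<in>perms_fixing k W. 1 / real (fp k \<sigma>) ^ n) / card (perms_fixing k U)"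
    unfolding Kb_def stab_eq_perms_fixing U_def[symmetric] by (simp add: sum_divide_distrib mult.commute)
  ultimately show ?thesis by (simp add: card_perms_fixing sum_perms_fixing_EY)
qed

text \<open>The index i stands for the overlap |U \<inter> V| of the value sets of u and v, so
  a + b - i = |U \<union> V|, and the condition a + b \<le> k + i says that U \<union> V fits into [k].\<close>

definition overlap_sum :: "nat \<Rightarrow> nat \<Rightarrow> nat \<Rightarrow> nat \<Rightarrow> real" where
  "overlap_sum k n a b = (\<Sum>i | i \<le> a \<and> i \<le> b \<and> a + b \<le> k + i.
      fact a * fact b / (fact i * fact (a - i) * fact (b - i)) * EY k n (a + b - i))"

lemma overlap_sum_commute: "overlap_sum k n a b = overlap_sum k n b a"
  unfolding overlap_sum_def
  by (intro sum.cong) (auto simp: add.commute mult.commute mult.left_commute)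

lemma overlap_sum_by_union_size:
  assumes "a \<le> b"
  shows "overlap_sum k n a b = (\<Sum>j = b..min (a + b) k.
           fact a * fact b / (fact (j - a) * fact (j - b) * fact (a + b - j)) * EY k n j)"
  unfolding overlap_sum_def
proof (rule sum.reindex_bij_witness[where j = "\<lambda>i. a + b - i" and i = "\<lambda>j. a + b - j"])
  fix i assume i: "i \<in> {i. i \<le> a \<and> i \<le> b \<and> a + b \<le> k + i}"
  then have "a + b - i - a = b - i" "a + b - i - b = a - i" "a + b - (a + b - i) = i" by auto
  then show "fact a * fact b / (fact (a + b - i - a) * fact (a + b - i - b) * fact (a + b - (a + b - i)))
        * EY k n (a + b - i)
      = fact a * fact b / (fact i * fact (a - i) * fact (b - i)) * EY k n (a + b - i)"
    by (simp add: mult_ac)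
qed (use assms in auto)

lemma overlap_sum_eq_binomial_sum:
  assumes "a \<le> k"
  shows "fact b * (\<Sum>i = 0..b. real ((a choose i) * ((k - a) choose (b - i)))
            * (fact (k - (a + b - i)) * EY k n (a + b - i) / fact (k - a)))
       = overlap_sum k n a b"
  unfolding overlap_sum_def sum_distrib_left
proof (rule sum.mono_neutral_cong_right)
  show "{i. i \<le> a \<and> i \<le> b \<and> a + b \<le> k + i} \<subseteq> {0..b}" by auto
  show "\<forall>i\<in>{0..b} - {i. i \<le> a \<and> i \<le> b \<and> a + b \<le> k + i}.
          fact b * (real ((a choose i) * ((k - a) choose (b - i)))
            * (fact (k - (a + b - i)) * EY k n (a + b - i) / fact (k - a))) = 0"
    using assms by auto
  fix i assume "i \<in> {i. i \<le> a \<and> i \<le> b \<and> a + b \<le> k + i}"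
  then have i: "i \<le> a" "i \<le> b" "a + b \<le> k + i" by auto
  then have "k - (a + b - i) = k - a - (b - i)" by auto
  then show "fact b * (real ((a choose i) * ((k - a) choose (b - i)))
            * (fact (k - (a + b - i)) * EY k n (a + b - i) / fact (k - a)))
      = fact a * fact b / (fact i * fact (a - i) * fact (b - i)) * EY k n (a + b - i)"
    using i assms by (simp add: binomial_fact field_simps)
qed simp

lemma Kbar_eq_overlap_sum:
  assumes "n \<le> k" and x: "x \<in> setparts n" and y: "y \<in> setparts n"
  shows "Kbar k n x y = overlap_sum k n (card x) (card y)"
proof -
  define u where "u = (SOME u. u \<in> words k n \<and> setpart n u = x)"
  have u: "u \<in> words k n" "setpart n u = x"
    unfolding u_def using someI_ex[OF ex_word_setpart[OF x assms(1)]] by auto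
  define U where "U = u ` {0..<n}"
  have U: "U \<subseteq> {0..<k}" "card U = card x"
    using u by (auto simp: U_def words_def card_setpart[symmetric])
  define Q where "Q j = fact (k - j) * EY k n j / fact (k - card x)" for j
  have "Kbar k n x y = (\<Sum>v | v \<in> words k n \<and> setpart n v = y. Q (card (U \<union> v ` {0..<n})))"
    unfolding Kbar_def Let_def u_def[symmetric]
    by (intro sum.cong refl) (simp add: Kb_eq_EY u(1) U Q_def flip: U_def)
  also have "\<dots> = fact (card y) * (\<Sum>V | V \<subseteq> {0..<k} \<and> card V = card y. Q (card (U \<union> V)))"
    by (rule sum_words_setpart[OF y])
  also have "(\<Sum>V | V \<subseteq> {0..<k} \<and> card V = card y. Q (card (U \<union> V)))
      = (\<Sum>V | V \<subseteq> {0..<k} \<and> card V = card y. Q (card x + card y - card (V \<inter> U)))"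
  proof (intro sum.cong refl)
    fix V assume "V \<in> {V. V \<subseteq> {0..<k} \<and> card V = card y}"
    then have "card U + card V = card (U \<union> V) + card (V \<inter> U)"
      using U by (metis card_Un_Int finite_atLeastLessThan finite_subset Int_commute mem_Collect_eq)
    then show "Q (card (U \<union> V)) = Q (card x + card y - card (V \<inter> U))"
      using U \<open>V \<in> _\<close> by simp
  qed
  also have "\<dots> = (\<Sum>i = 0..card y. real ((card x choose i) * ((k - card x) choose (card y - i)))
                   * Q (card x + card y - i))"
    using sum_subsets_overlap[of "{0..<k}" U "\<lambda>i. Q (card x + card y - i)"] U by simp
  finally show ?thesis
    unfolding Q_def using overlap_sum_eq_binomial_sum U card_mono[OF _ U(1)] by simp
qed

theorem proposition3p1:
  fixes k n :: nat and x y :: "nat set set"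
  assumes "1 \<le> n" and "n \<le> k"
    and "x \<in> setparts n" and "y \<in> setparts n"
  shows "(card x \<le> card y \<longrightarrow>
            Kbar k n x y =
              (\<Sum>j = card y..min (card x + card y) k.
                 fact (card x) * fact (card y) /
                 (fact (j - card x) * fact (j - card y) * fact (card x + card y - j))
                 * EY k n j))
       \<and> (card x > card y \<longrightarrow> Kbar k n x y = Kbar k n y x)"
  using Kbar_eq_overlap_sum[OF assms(2,3,4)] Kbar_eq_overlap_sum[OF assms(2,4,3)]
  by (simp add: overlap_sum_by_union_size overlap_sum_commute[of k n "card y"])

end
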